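(* Let $N\ge1$, let $K$ be a nonempty compact subset of $\mathbb{R}_+^N=[0,\infty)^N$, let $X$ be a compact Hausdorff space, and let $T_n$ ($n\in\mathbb{N}$) and $A$ be weakly nonlinear and monotone operators from $C(K)$ into $C(X)$ such that $A(1)(x)>0$ for all $x\in X$ and $$A(1)\,A\Big(\sum_{k=1}^N\mathrm{pr}_k^2\Big)=\sum_{k=1}^N\big(A(-\mathrm{pr}_k)\big)^2 .$$ If $T_n(g)\to A(g)$ uniformly on $X$ for each of the functions $g=1,\,-\mathrm{pr}_1,\dots,-\mathrm{pr}_N,\,\sum_{k=1}^N\mathrm{pr}_k^2$, then $T_n(f)\to A(f)$ uniformly on $X$ for every $f\in C(K)$.
   Context: For a compact space $Y$, $C(Y)$ denotes the Banach lattice of continuous real-valued functions on $Y$ with the pointwise order and the sup norm; products and squares of functions are pointwise, and $1$ denotes the constant function one. $\mathrm{pr}_k:K\to\mathbb{R}$ is the $k$-th coordinate projection. An operator $T:C(K)\to C(X)$ is weakly nonlinear if $T(f+g)\le T(f)+T(g)$ and $T(\alpha f)=\alpha T(f)$ for all $f,g$ and $\alpha\ge0$, and $T(f+\alpha\cdot1)=T(f)+\alpha T(1)$ for all $f$ and $\alpha\ge0$. $T$ is monotone if $f\le g$ implies $T(f)\le T(g)$. *)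

theory Defs
  imports "HOL-Analysis.Analysis"
begin

text \<open>An operator C(K) -> C(X) is modelled as a map on functions; all conditions are
  imposed only for inputs in C(K) and evaluated only on points of K resp. of the
  space X (given as an abstract topology).\<close>

definition CK :: "(real^'n) set \<Rightarrow> ((real^'n) \<Rightarrow> real) set" where
  "CK K = {f. continuous_on K f}"

definition maps_CK_CX :: "(real^'n) set \<Rightarrow> 'x topology \<Rightarrow> (((real^'n) \<Rightarrow> real) \<Rightarrow> 'x \<Rightarrow> real) \<Rightarrow> bool" where
  "maps_CK_CX K Xt T \<longleftrightarrow> (\<forall>f\<in>CK K. continuous_map Xt euclideanreal (T f))"

definition weakly_nonlinear :: "(real^'n) set \<Rightarrow> 'x topology \<Rightarrow> (((real^'n) \<Rightarrow> real) \<Rightarrow> 'x \<Rightarrow> real) \<Rightarrow> bool" where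
  "weakly_nonlinear K Xt T \<longleftrightarrow>
     (\<forall>f\<in>CK K. \<forall>g\<in>CK K. \<forall>x\<in>topspace Xt. T (\<lambda>y. f y + g y) x \<le> T f x + T g x) \<and>
     (\<forall>f\<in>CK K. \<forall>a::real. a \<ge> 0 \<longrightarrow> (\<forall>x\<in>topspace Xt. T (\<lambda>y. a * f y) x = a * T f x)) \<and>
     (\<forall>f\<in>CK K. \<forall>a::real. a \<ge> 0 \<longrightarrow> (\<forall>x\<in>topspace Xt. T (\<lambda>y. f y + a) x = T f x + a * T (\<lambda>y. 1) x))"

definition monotone_op :: "(real^'n) set \<Rightarrow> 'x topology \<Rightarrow> (((real^'n) \<Rightarrow> real) \<Rightarrow> 'x \<Rightarrow> real) \<Rightarrow> bool" where
  "monotone_op K Xt T \<longleftrightarrow>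
     (\<forall>f\<in>CK K. \<forall>g\<in>CK K. (\<forall>y\<in>K. f y \<le> g y) \<longrightarrow> (\<forall>x\<in>topspace Xt. T f x \<le> T g x))"

end

theory Submission
  imports Defs
begin

text \<open>Expanding \<open>|y - z|\<^sup>2\<close> bounds \<open>U(|\<cdot> - z|\<^sup>2)(x)\<close>, for \<open>z \<ge> 0\<close>, by a quantity built only
  from the test functions \<open>1, -pr\<^sub>k, \<Sum> pr\<^sub>k\<^sup>2\<close>. For \<open>A\<close> this majorant vanishes at the barycenter
  \<open>c(x) = (-A(-pr\<^sub>k)(x) / A(1)(x))\<^sub>k\<close> precisely because of the hypothesis on \<open>A\<close>; by monotonicity this
  forces \<open>c(x) \<in> K\<close>. A continuous \<open>f\<close> on compact \<open>K\<close> satisfies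
  \<open>|f y - f z| \<le> \<epsilon> + C |y - z|\<^sup>2\<close>, so \<open>U f x\<close> lies within \<open>\<epsilon> U(1)(x) + C \<cdot> majorant\<close> of
  \<open>f(c(x)) U(1)(x)\<close>, both for \<open>U = T\<^sub>n\<close> and \<open>U = A\<close>. Since the majorant of \<open>T\<^sub>n\<close> at \<open>c(x)\<close>
  converges uniformly to that of \<open>A\<close>, which is \<open>0\<close>, \<open>T\<^sub>n f \<rightarrow> A f\<close> uniformly.\<close>

lemma mem_CK_iff [simp]: "f \<in> CK K \<longleftrightarrow> continuous_on K f"
  by (simp add: CK_def)

lemma weakly_nonlinear_subadditive:
  assumes "weakly_nonlinear K Xt U" "f \<in> CK K" "g \<in> CK K" "x \<in> topspace Xt"
  shows "U (\<lambda>y. f y + g y) x \<le> U f x + U g x"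
  using assms unfolding weakly_nonlinear_def by blast

lemma weakly_nonlinear_pos_homogeneous:
  assumes "weakly_nonlinear K Xt U" "f \<in> CK K" "a \<ge> 0" "x \<in> topspace Xt"
  shows "U (\<lambda>y. a * f y) x = a * U f x"
  using assms unfolding weakly_nonlinear_def by blast

lemma weakly_nonlinear_zero:
  assumes "weakly_nonlinear K Xt U" "x \<in> topspace Xt"
  shows "U (\<lambda>y. 0) x = 0"
  using weakly_nonlinear_pos_homogeneous[OF assms(1) _ order_refl assms(2), of "\<lambda>y. 0"] by simp

text \<open>The translation rule is only postulated for \<open>a \<ge> 0\<close>; translating back by \<open>-a\<close> gives it for all \<open>a\<close>.\<close>

lemma weakly_nonlinear_translate:
  assumes wn: "weakly_nonlinear K Xt U" and x: "x \<in> topspace Xt" and f: "f \<in> CK K"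
  shows "U (\<lambda>y. f y + a) x = U f x + a * U (\<lambda>y. 1) x"
proof (cases "a \<ge> 0")
  case True
  then show ?thesis using wn f x unfolding weakly_nonlinear_def by blast
next
  case False
  have "(\<lambda>y. f y + a) \<in> CK K" using f by (auto intro!: continuous_intros)
  with False wn x have "U (\<lambda>y. (f y + a) + -a) x = U (\<lambda>y. f y + a) x + -a * U (\<lambda>y. 1) x"
    unfolding weakly_nonlinear_def by (meson neg_0_le_iff_le not_le_imp_less order.strict_implies_order)
  then show ?thesis by simp
qed

lemma weakly_nonlinear_const:
  assumes "weakly_nonlinear K Xt U" "x \<in> topspace Xt"
  shows "U (\<lambda>y. a) x = a * U (\<lambda>y. 1) x"
  using weakly_nonlinear_translate[OF assms, of "\<lambda>y. 0" a] weakly_nonlinear_zero[OF assms] by simp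

lemma weakly_nonlinear_sum_le:
  assumes wn: "weakly_nonlinear K Xt U" and x: "x \<in> topspace Xt"
    and "finite S" "\<And>i. i \<in> S \<Longrightarrow> g i \<in> CK K"
  shows "U (\<lambda>y. \<Sum>i\<in>S. g i y) x \<le> (\<Sum>i\<in>S. U (g i) x)"
  using assms(3,4)
proof (induction S rule: finite_induct)
  case empty
  then show ?case using weakly_nonlinear_zero[OF wn x] by simp
next
  case (insert i S)
  have "(\<lambda>y. \<Sum>i\<in>S. g i y) \<in> CK K"
    using insert.prems by (auto intro!: continuous_on_sum)
  then have "U (\<lambda>y. g i y + (\<Sum>i\<in>S. g i y)) x \<le> U (g i) x + U (\<lambda>y. \<Sum>i\<in>S. g i y) x"
    using insert.prems by (intro weakly_nonlinear_subadditive[OF wn _ _ x]) auto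
  with insert show ?case by simp
qed

lemma monotone_opD:
  assumes "monotone_op K Xt U" "f \<in> CK K" "g \<in> CK K" "\<And>y. y \<in> K \<Longrightarrow> f y \<le> g y" "x \<in> topspace Xt"
  shows "U f x \<le> U g x"
  using assms unfolding monotone_op_def by blast

lemma dist_square_cart: "(dist y (z::real^'n))\<^sup>2 = (\<Sum>k\<in>UNIV. (y$k - z$k)\<^sup>2)"
  by (simp add: dist_norm norm_vec_def L2_set_def sum_nonneg)

definition sqdist_majorant ::
    "(((real^'n) \<Rightarrow> real) \<Rightarrow> 'x \<Rightarrow> real) \<Rightarrow> real^'n \<Rightarrow> 'x \<Rightarrow> real" where
  "sqdist_majorant U z x = U (\<lambda>y. \<Sum>k\<in>UNIV. (y$k)\<^sup>2) x + (\<Sum>k\<in>UNIV. 2 * z$k * U (\<lambda>y. - y$k) x)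
     + (\<Sum>k\<in>UNIV. (z$k)\<^sup>2) * U (\<lambda>y. 1) x"

text \<open>Expanding \<open>(y\<^sub>k - z\<^sub>k)\<^sup>2 = y\<^sub>k\<^sup>2 + 2 z\<^sub>k (-y\<^sub>k) + z\<^sub>k\<^sup>2\<close>; the sign condition on \<open>z\<close>
  makes the middle coefficients admissible for positive homogeneity.\<close>

lemma weakly_nonlinear_sqdist_le:
  fixes U :: "((real^'n) \<Rightarrow> real) \<Rightarrow> 'x \<Rightarrow> real"
  assumes wn: "weakly_nonlinear K Xt U" and x: "x \<in> topspace Xt" and z: "\<forall>k. 0 \<le> z$k"
  shows "U (\<lambda>y. (dist y z)\<^sup>2) x \<le> sqdist_majorant U z x"
proof -
  define sq where "sq = (\<lambda>y::real^'n. \<Sum>k\<in>UNIV. (y$k)\<^sup>2)"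
  define lin where "lin = (\<lambda>y::real^'n. \<Sum>k\<in>UNIV. 2 * z$k * - y$k)"
  have sq: "sq \<in> CK K" and lin: "lin \<in> CK K"
    unfolding sq_def lin_def by (auto intro!: continuous_intros)
  have "(\<lambda>y. (dist y z)\<^sup>2) = (\<lambda>y. (sq y + lin y) + (\<Sum>k\<in>UNIV. (z$k)\<^sup>2))"
    unfolding dist_square_cart sq_def lin_def
    by (rule ext) (simp add: sum.distrib[symmetric] power2_diff algebra_simps)
  then have "U (\<lambda>y. (dist y z)\<^sup>2) x = U (\<lambda>y. sq y + lin y) x + (\<Sum>k\<in>UNIV. (z$k)\<^sup>2) * U (\<lambda>y. 1) x"
    using weakly_nonlinear_translate[OF wn x] sq lin by (simp add: continuous_on_add)
  also have "U (\<lambda>y. sq y + lin y) x \<le> U sq x + U lin x"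
    by (rule weakly_nonlinear_subadditive[OF wn sq lin x])
  also have "U lin x \<le> (\<Sum>k\<in>UNIV. U (\<lambda>y. 2 * z$k * - y$k) x)"
    unfolding lin_def by (rule weakly_nonlinear_sum_le[OF wn x]) (auto intro!: continuous_intros)
  also have "\<dots> = (\<Sum>k\<in>UNIV. 2 * z$k * U (\<lambda>y. - y$k) x)"
    using z by (intro sum.cong refl weakly_nonlinear_pos_homogeneous[OF wn _ _ x])
      (auto intro!: continuous_intros)
  finally show ?thesis unfolding sqdist_majorant_def sq_def by simp
qed

lemma continuous_on_compact_sqdist_modulus:
  fixes f :: "'a::metric_space \<Rightarrow> real"
  assumes K: "compact K" and f: "continuous_on K f" and \<epsilon>: "\<epsilon> > 0"
  obtains C where "C \<ge> 0" "\<And>y z. y \<in> K \<Longrightarrow> z \<in> K \<Longrightarrow> \<bar>f y - f z\<bar> \<le> \<epsilon> + C * (dist y z)\<^sup>2"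
proof -
  obtain d where d: "d > 0" and close: "\<And>y z. y \<in> K \<Longrightarrow> z \<in> K \<Longrightarrow> dist y z < d \<Longrightarrow> \<bar>f y - f z\<bar> < \<epsilon>"
    using compact_uniformly_continuous[OF f K] \<epsilon>
    unfolding uniformly_continuous_on_def dist_real_def by metis
  obtain M where M: "\<And>y. y \<in> K \<Longrightarrow> \<bar>f y\<bar> \<le> M"
    using compact_imp_bounded[OF compact_continuous_image[OF f K]] unfolding bounded_real by blast
  define C where "C = 2 * max M 0 / d\<^sup>2"
  show ?thesis
  proof
    show "C \<ge> 0" unfolding C_def by simp
    fix y z assume y: "y \<in> K" and z: "z \<in> K"
    show "\<bar>f y - f z\<bar> \<le> \<epsilon> + C * (dist y z)\<^sup>2"
    proof (cases "dist y z < d")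
      case True
      then show ?thesis using close[OF y z] \<open>C \<ge> 0\<close> by (smt (verit) zero_le_mult_iff zero_le_power2)
    next
      case False
      then have "C * d\<^sup>2 \<le> C * (dist y z)\<^sup>2"
        using d \<open>C \<ge> 0\<close> by (simp add: mult_left_mono power_mono)
      moreover have "C * d\<^sup>2 = 2 * max M 0" unfolding C_def using d by simp
      ultimately show ?thesis using M[OF y] M[OF z] \<epsilon> by linarith
    qed
  qed
qed

lemma weakly_nonlinear_monotone_estimate:
  fixes U :: "((real^'n) \<Rightarrow> real) \<Rightarrow> 'x \<Rightarrow> real"
  assumes wn: "weakly_nonlinear K Xt U" and mono: "monotone_op K Xt U"
    and f: "f \<in> CK K" and C: "C \<ge> 0" and x: "x \<in> topspace Xt" and z: "\<forall>k. 0 \<le> z$k"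
    and modulus: "\<And>y. y \<in> K \<Longrightarrow> \<bar>f y - f z\<bar> \<le> \<epsilon> + C * (dist y z)\<^sup>2"
  shows "\<bar>U f x - f z * U (\<lambda>y. 1) x\<bar> \<le> \<epsilon> * U (\<lambda>y. 1) x + C * sqdist_majorant U z x"
proof -
  define q where "q = (\<lambda>y. C * (dist y z)\<^sup>2)"
  have q: "q \<in> CK K" unfolding q_def by (auto intro!: continuous_intros)
  have "U q x = C * U (\<lambda>y. (dist y z)\<^sup>2) x"
    unfolding q_def by (rule weakly_nonlinear_pos_homogeneous[OF wn _ C x]) (auto intro!: continuous_intros)
  also have "\<dots> \<le> C * sqdist_majorant U z x"
    using weakly_nonlinear_sqdist_le[OF wn x z] C by (rule mult_left_mono)
  finally have Uq: "U q x \<le> C * sqdist_majorant U z x" .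
  have bounds: "f z - \<epsilon> \<le> f y + q y" "f y \<le> q y + (f z + \<epsilon>)" if "y \<in> K" for y
    using modulus[OF that] unfolding q_def by (auto simp: abs_le_iff)
  have "U f x \<le> U (\<lambda>y. q y + (f z + \<epsilon>)) x"
    using f q bounds by (intro monotone_opD[OF mono _ _ _ x]) (auto simp: q_def intro!: continuous_intros)
  also have "\<dots> = U q x + (f z + \<epsilon>) * U (\<lambda>y. 1) x"
    by (rule weakly_nonlinear_translate[OF wn x q])
  finally have upper: "U f x \<le> U q x + (f z + \<epsilon>) * U (\<lambda>y. 1) x" .
  have "(f z - \<epsilon>) * U (\<lambda>y. 1) x = U (\<lambda>y. f z - \<epsilon>) x"
    by (rule weakly_nonlinear_const[OF wn x, symmetric])
  also have "\<dots> \<le> U (\<lambda>y. f y + q y) x"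
    using f q bounds by (intro monotone_opD[OF mono _ _ _ x]) (auto simp: q_def intro!: continuous_intros)
  also have "\<dots> \<le> U f x + U q x"
    by (rule weakly_nonlinear_subadditive[OF wn f q x])
  finally have lower: "(f z - \<epsilon>) * U (\<lambda>y. 1) x \<le> U f x + U q x" .
  from upper lower Uq show ?thesis by (simp add: abs_le_iff algebra_simps)
qed

definition barycenter :: "(((real^'n) \<Rightarrow> real) \<Rightarrow> 'x \<Rightarrow> real) \<Rightarrow> 'x \<Rightarrow> real^'n" where
  "barycenter U x = (\<chi> k. - U (\<lambda>y. - y$k) x / U (\<lambda>y. 1) x)"

lemma barycenter_nonneg:
  assumes wn: "weakly_nonlinear K Xt U" and mono: "monotone_op K Xt U"
    and K_pos: "\<forall>y\<in>K. \<forall>k. 0 \<le> y$k" and x: "x \<in> topspace Xt" and U1: "U (\<lambda>y. 1) x > 0"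
  shows "0 \<le> barycenter U x $ k"
proof -
  have "U (\<lambda>y. - y$k) x \<le> U (\<lambda>y. 0) x"
    using K_pos by (intro monotone_opD[OF mono _ _ _ x]) (auto intro!: continuous_intros)
  then show ?thesis
    using weakly_nonlinear_zero[OF wn x] U1 unfolding barycenter_def by (simp add: divide_nonpos_pos)
qed

lemma sqdist_majorant_barycenter:
  assumes U1: "U (\<lambda>y. 1) x > 0"
    and eq: "U (\<lambda>y. 1) x * U (\<lambda>y. \<Sum>k\<in>UNIV. (y$k)\<^sup>2) x = (\<Sum>k\<in>UNIV. (U (\<lambda>y. - y$k) x)\<^sup>2)"
  shows "sqdist_majorant U (barycenter U x) x = 0"
proof -
  define a where "a = U (\<lambda>y. 1) x"
  define S where "S = (\<Sum>k\<in>UNIV. (U (\<lambda>y. - y$k) x)\<^sup>2)"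
  have a: "a > 0" using U1 unfolding a_def .
  have sq: "U (\<lambda>y. \<Sum>k\<in>UNIV. (y$k)\<^sup>2) x = S / a"
    using eq a unfolding a_def S_def by (simp add: field_simps)
  have lin: "(\<Sum>k\<in>UNIV. 2 * barycenter U x $ k * U (\<lambda>y. - y$k) x) = - 2 * S / a"
    unfolding barycenter_def a_def S_def
    by (simp add: sum_distrib_left sum_divide_distrib power2_eq_square mult.assoc)
  have const: "(\<Sum>k\<in>UNIV. (barycenter U x $ k)\<^sup>2) = S / a\<^sup>2"
    unfolding barycenter_def a_def S_def by (simp add: sum_divide_distrib power_divide)
  have "sqdist_majorant U (barycenter U x) x = S / a - 2 * S / a + S / a\<^sup>2 * a"
    unfolding sqdist_majorant_def sq lin const by (simp add: a_def)
  also have "\<dots> = 0" using a by (simp add: field_simps power2_eq_square)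
  finally show ?thesis .
qed

lemma mem_if_sqdist_majorant_nonpos:
  assumes K: "compact K" "K \<noteq> {}"
    and wn: "weakly_nonlinear K Xt U" and mono: "monotone_op K Xt U"
    and x: "x \<in> topspace Xt" and U1: "U (\<lambda>y. 1) x > 0" and z: "\<forall>k. 0 \<le> z$k"
    and le: "sqdist_majorant U z x \<le> 0"
  shows "z \<in> K"
proof (rule ccontr)
  assume "z \<notin> K"
  then have d: "infdist z K > 0"
    using K by (intro infdist_pos_not_in_closed) (auto intro: compact_imp_closed)
  have "(infdist z K)\<^sup>2 * U (\<lambda>y. 1) x = U (\<lambda>y. (infdist z K)\<^sup>2) x"
    by (rule weakly_nonlinear_const[OF wn x, symmetric])
  also have "\<dots> \<le> U (\<lambda>y. (dist y z)\<^sup>2) x"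
    using d by (intro monotone_opD[OF mono _ _ _ x] power_mono)
      (auto simp: dist_commute[of _ z] infdist_le intro!: continuous_intros)
  also have "\<dots> \<le> 0"
    using weakly_nonlinear_sqdist_le[OF wn x z] le by linarith
  moreover have "(infdist z K)\<^sup>2 * U (\<lambda>y. 1) x > 0" using d U1 by simp
  ultimately show False by linarith
qed

lemma maps_CK_CX_bounded_image:
  assumes "maps_CK_CX K Xt U" "compact_space Xt" "g \<in> CK K"
  shows "bounded (U g ` topspace Xt)"
proof -
  have "continuous_map Xt euclideanreal (U g)"
    using assms(1,3) unfolding maps_CK_CX_def by blast
  then have "compactin euclideanreal (U g ` topspace Xt)"
    using assms(2) unfolding compact_space_def by (rule image_compactin[rotated])
  then show ?thesis by (simp add: compact_imp_bounded)
qed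

lemma uniform_limit_sum:
  fixes f :: "'i \<Rightarrow> 'a \<Rightarrow> 'b \<Rightarrow> 'c::real_normed_vector"
  assumes "finite I" "\<And>i. i \<in> I \<Longrightarrow> uniform_limit S (f i) (l i) F"
  shows "uniform_limit S (\<lambda>n x. \<Sum>i\<in>I. f i n x) (\<lambda>x. \<Sum>i\<in>I. l i x) F"
  using assms by (induction I rule: finite_induct) (auto intro!: uniform_limit_intros)

lemma uniform_limit_mult_bounded_left:
  fixes f :: "'a \<Rightarrow> 'b \<Rightarrow> real"
  assumes lim: "uniform_limit S f l F" and c: "bounded (c ` S)"
  shows "uniform_limit S (\<lambda>n x. c x * f n x) (\<lambda>x. c x * l x) F"
proof (rule uniform_limitI)
  obtain B where B: "B > 0" "\<And>x. x \<in> S \<Longrightarrow> \<bar>c x\<bar> \<le> B"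
    using c unfolding bounded_pos by auto
  fix e :: real assume "e > 0"
  with B have "\<forall>\<^sub>F n in F. \<forall>x\<in>S. dist (f n x) (l x) < e / B"
    by (intro uniform_limitD[OF lim]) simp
  then show "\<forall>\<^sub>F n in F. \<forall>x\<in>S. dist (c x * f n x) (c x * l x) < e"
  proof (rule eventually_mono, intro ballI)
    fix n x assume close: "\<forall>x\<in>S. dist (f n x) (l x) < e / B" and x: "x \<in> S"
    have "dist (c x * f n x) (c x * l x) = \<bar>c x\<bar> * dist (f n x) (l x)"
      by (simp add: dist_real_def abs_mult right_diff_distrib[symmetric])
    also have "\<dots> \<le> B * dist (f n x) (l x)"
      using B(2)[OF x] by (simp add: mult_right_mono)
    also have "\<dots> < e" using close x B(1) by (simp add: field_simps)
    finally show "dist (c x * f n x) (c x * l x) < e" .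
  qed
qed

lemma uniform_limit_sqdist_majorant:
  fixes T :: "nat \<Rightarrow> ((real^'n) \<Rightarrow> real) \<Rightarrow> 'x \<Rightarrow> real" and z :: "'x \<Rightarrow> real^'n"
  assumes "uniform_limit S (\<lambda>n. T n (\<lambda>y. 1)) (A (\<lambda>y. 1)) F"
    and "\<And>k. uniform_limit S (\<lambda>n. T n (\<lambda>y. - y$k)) (A (\<lambda>y. - y$k)) F"
    and "uniform_limit S (\<lambda>n. T n (\<lambda>y. \<Sum>k\<in>UNIV. (y$k)\<^sup>2)) (A (\<lambda>y. \<Sum>k\<in>UNIV. (y$k)\<^sup>2)) F"
    and z: "bounded (z ` S)"
  shows "uniform_limit S (\<lambda>n x. sqdist_majorant (T n) (z x) x) (\<lambda>x. sqdist_majorant A (z x) x) F"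
proof -
  obtain P where P: "\<And>x. x \<in> S \<Longrightarrow> norm (z x) \<le> P"
    using z unfolding bounded_iff by auto
  have comp: "\<bar>z x $ k\<bar> \<le> P" if "x \<in> S" for x k
    using component_le_norm_cart[of "z x" k] P[OF that] by simp
  then have "\<bar>2 * z x $ k\<bar> \<le> 2 * P" if "x \<in> S" for x k
    using that by (simp add: abs_mult)
  then have bdd_lin: "bounded ((\<lambda>x. 2 * z x $ k) ` S)" for k
    unfolding bounded_real by blast
  then have "\<bar>\<Sum>k\<in>UNIV. (z x $ k)\<^sup>2\<bar> \<le> real CARD('n) * P\<^sup>2" if "x \<in> S" for x
  proof -
    have "(\<Sum>k\<in>UNIV. (z x $ k)\<^sup>2) \<le> (\<Sum>k\<in>(UNIV::'n set). P\<^sup>2)"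
      using comp[OF that] by (intro sum_mono) (metis abs_le_square_iff abs_of_nonneg abs_ge_zero order.trans)
    then show ?thesis by (simp add: sum_nonneg)
  qed
  then have bdd_const: "bounded ((\<lambda>x. \<Sum>k\<in>UNIV. (z x $ k)\<^sup>2) ` S)"
    unfolding bounded_real by blast
  show ?thesis
    unfolding sqdist_majorant_def
    by (intro uniform_limit_add uniform_limit_sum uniform_limit_mult_bounded_left assms bdd_lin bdd_const) simp
qed

lemma uniform_limit_by_approximation:
  fixes f :: "'a \<Rightarrow> 'b \<Rightarrow> 'c::metric_space" and g :: "'a \<Rightarrow> 'b \<Rightarrow> real"
  assumes "\<And>\<epsilon>. \<epsilon> > 0 \<Longrightarrow> \<exists>g. uniform_limit S g (\<lambda>x. 0) F \<and>
             (\<forall>\<^sub>F n in F. \<forall>x\<in>S. dist (f n x) (l x) \<le> \<epsilon> + g n x)"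
  shows "uniform_limit S f l F"
proof (rule uniform_limitI)
  fix e :: real assume "e > 0"
  then obtain g where g: "uniform_limit S g (\<lambda>x. 0) F"
    and approx: "\<forall>\<^sub>F n in F. \<forall>x\<in>S. dist (f n x) (l x) \<le> e / 2 + g n x"
    using assms[of "e / 2"] by auto
  from uniform_limitD[OF g, of "e / 2"] \<open>e > 0\<close>
  have "\<forall>\<^sub>F n in F. \<forall>x\<in>S. dist (g n x) 0 < e / 2" by simp
  with approx show "\<forall>\<^sub>F n in F. \<forall>x\<in>S. dist (f n x) (l x) < e"
    by eventually_elim (fastforce simp: dist_real_def)
qed

lemma dist_le_at_vanishing_sqdist_majorant:
  fixes U V :: "((real^'n) \<Rightarrow> real) \<Rightarrow> 'x \<Rightarrow> real"
  assumes U: "weakly_nonlinear K Xt U" "monotone_op K Xt U"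
    and V: "weakly_nonlinear K Xt V" "monotone_op K Xt V"
    and f: "f \<in> CK K" and C: "C \<ge> 0" and \<epsilon>: "\<epsilon> \<ge> 0"
    and x: "x \<in> topspace Xt" and z: "\<forall>k. 0 \<le> z$k"
    and modulus: "\<And>y. y \<in> K \<Longrightarrow> \<bar>f y - f z\<bar> \<le> \<epsilon> + C * (dist y z)\<^sup>2"
    and V_majorant: "sqdist_majorant V z x = 0"
    and M: "\<bar>f z\<bar> \<le> M" and B: "V (\<lambda>y. 1) x \<le> B"
  shows "dist (U f x) (V f x)
    \<le> 2 * \<epsilon> * B + (M + \<epsilon>) * \<bar>U (\<lambda>y. 1) x - V (\<lambda>y. 1) x\<bar> + C * \<bar>sqdist_majorant U z x\<bar>"
proof -
  define u v where "u = U (\<lambda>y. 1) x" and "v = V (\<lambda>y. 1) x"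
  have U_est: "\<bar>U f x - f z * u\<bar> \<le> \<epsilon> * u + C * \<bar>sqdist_majorant U z x\<bar>"
    using weakly_nonlinear_monotone_estimate[OF U f C x z modulus] C unfolding u_def
    by (smt (verit) abs_ge_self mult_left_mono)
  have V_est: "\<bar>V f x - f z * v\<bar> \<le> \<epsilon> * v"
    using weakly_nonlinear_monotone_estimate[OF V f C x z modulus] V_majorant unfolding v_def by simp
  have "\<bar>f z * u - f z * v\<bar> \<le> M * \<bar>u - v\<bar>"
    using M by (simp add: abs_mult right_diff_distrib[symmetric] mult_right_mono)
  moreover have "\<epsilon> * u \<le> \<epsilon> * B + \<epsilon> * \<bar>u - v\<bar>" "\<epsilon> * v \<le> \<epsilon> * B"
    using \<epsilon> B unfolding v_def by (auto simp: distrib_left[symmetric] intro!: mult_left_mono)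
  ultimately show ?thesis
    using U_est V_est unfolding dist_real_def u_def[symmetric] v_def[symmetric]
    by (simp add: abs_le_iff algebra_simps)
qed

lemma uniform_limit_apply_of_sqdist_majorant:
  fixes U :: "'i \<Rightarrow> ((real^'n) \<Rightarrow> real) \<Rightarrow> 'x \<Rightarrow> real" and c :: "'x \<Rightarrow> real^'n"
  assumes K: "compact K"
    and U_wn: "\<And>n. weakly_nonlinear K Xt (U n)" and U_mono: "\<And>n. monotone_op K Xt (U n)"
    and V_wn: "weakly_nonlinear K Xt V" and V_mono: "monotone_op K Xt V"
    and V_bounded: "bounded (V (\<lambda>y. 1) ` topspace Xt)"
    and c_mem: "\<And>x. x \<in> topspace Xt \<Longrightarrow> c x \<in> K"
    and c_nonneg: "\<And>x. x \<in> topspace Xt \<Longrightarrow> \<forall>k. 0 \<le> c x $ k"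
    and V_majorant: "\<And>x. x \<in> topspace Xt \<Longrightarrow> sqdist_majorant V (c x) x = 0"
    and lim_1: "uniform_limit (topspace Xt) (\<lambda>n. U n (\<lambda>y. 1)) (V (\<lambda>y. 1)) F"
    and lim_majorant: "uniform_limit (topspace Xt) (\<lambda>n x. sqdist_majorant (U n) (c x) x) (\<lambda>x. 0) F"
    and f: "f \<in> CK K"
  shows "uniform_limit (topspace Xt) (\<lambda>n. U n f) (V f) F"
proof (rule uniform_limit_by_approximation)
  obtain B where B: "\<And>x. x \<in> topspace Xt \<Longrightarrow> V (\<lambda>y. 1) x \<le> B"
    using V_bounded unfolding bounded_real by (meson abs_le_D1 imageI)
  have "bounded (f ` K)"
    using f by (intro compact_imp_bounded compact_continuous_image K) simp
  then obtain M where M: "\<And>y. y \<in> K \<Longrightarrow> \<bar>f y\<bar> \<le> M"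
    unfolding bounded_real by blast
  fix e :: real assume e: "e > 0"
  define \<epsilon> where "\<epsilon> = e / (2 * \<bar>B\<bar> + 1)"
  have \<epsilon>: "\<epsilon> > 0" and \<epsilon>_scale: "\<epsilon> * (2 * \<bar>B\<bar> + 1) = e"
    using e unfolding \<epsilon>_def by (simp_all add: add_nonneg_pos)
  have "2 * \<epsilon> * B \<le> 2 * \<epsilon> * \<bar>B\<bar>" using \<epsilon> by (intro mult_left_mono) auto
  also have "\<dots> \<le> e" using \<epsilon> \<epsilon>_scale by (simp add: algebra_simps)
  finally have \<epsilon>_B: "2 * \<epsilon> * B \<le> e" .
  obtain C where C: "C \<ge> 0"
    and modulus: "\<And>y z. y \<in> K \<Longrightarrow> z \<in> K \<Longrightarrow> \<bar>f y - f z\<bar> \<le> \<epsilon> + C * (dist y z)\<^sup>2"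
    using continuous_on_compact_sqdist_modulus[OF K _ \<epsilon>, of f] f by auto
  define g where "g = (\<lambda>n x. (M + \<epsilon>) * norm (U n (\<lambda>y. 1) x - V (\<lambda>y. 1) x)
    + C * norm (sqdist_majorant (U n) (c x) x))"
  have "uniform_limit (topspace Xt) g
      (\<lambda>x. (M + \<epsilon>) * norm (V (\<lambda>y. 1) x - V (\<lambda>y. 1) x) + C * norm (0::real)) F"
    unfolding g_def by (intro uniform_limit_intros lim_1 lim_majorant)
  then have "uniform_limit (topspace Xt) g (\<lambda>x. 0) F"
    by simp
  moreover have "dist (U n f x) (V f x) \<le> e + g n x" if "x \<in> topspace Xt" for n x
    using dist_le_at_vanishing_sqdist_majorant[OF U_wn[of n] U_mono[of n] V_wn V_mono f C
        less_imp_le[OF \<epsilon>] that c_nonneg[OF that] modulus[OF _ c_mem[OF that]] V_majorant[OF that]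
        M[OF c_mem[OF that]] B[OF that]] \<epsilon>_B
    unfolding g_def real_norm_def by linarith
  ultimately show "\<exists>g. uniform_limit (topspace Xt) g (\<lambda>x. 0) F \<and>
      (\<forall>\<^sub>F n in F. \<forall>x\<in>topspace Xt. dist (U n f x) (V f x) \<le> e + g n x)"
    by (intro exI[of _ g] conjI always_eventually allI ballI) auto
qed

theorem mainTheorem3:
  fixes K :: "(real^'n) set" and Xt :: "'x topology"
    and T :: "nat \<Rightarrow> ((real^'n) \<Rightarrow> real) \<Rightarrow> 'x \<Rightarrow> real"
    and A :: "((real^'n) \<Rightarrow> real) \<Rightarrow> 'x \<Rightarrow> real"
  assumes K_compact: "compact K" and K_ne: "K \<noteq> {}"
    and K_pos: "\<forall>y\<in>K. \<forall>k. 0 \<le> y $ k"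
    and X_compact: "compact_space Xt" and X_Haus: "Hausdorff_space Xt"
    and T_maps: "\<And>n. maps_CK_CX K Xt (T n)"
    and T_wn: "\<And>n. weakly_nonlinear K Xt (T n)"
    and T_mono: "\<And>n. monotone_op K Xt (T n)"
    and A_maps: "maps_CK_CX K Xt A"
    and A_wn: "weakly_nonlinear K Xt A"
    and A_mono: "monotone_op K Xt A"
    and A1_pos: "\<forall>x\<in>topspace Xt. A (\<lambda>y. 1) x > 0"
    and A_eq: "\<forall>x\<in>topspace Xt.
        A (\<lambda>y. 1) x * A (\<lambda>y. \<Sum>k\<in>UNIV. (y $ k)\<^sup>2) x = (\<Sum>k\<in>UNIV. (A (\<lambda>y. - (y $ k)) x)\<^sup>2)"
    and conv_1: "uniform_limit (topspace Xt) (\<lambda>n. T n (\<lambda>y. 1)) (A (\<lambda>y. 1)) sequentially"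
    and conv_pr: "\<And>k. uniform_limit (topspace Xt) (\<lambda>n. T n (\<lambda>y. - (y $ k))) (A (\<lambda>y. - (y $ k))) sequentially"
    and conv_sq: "uniform_limit (topspace Xt) (\<lambda>n. T n (\<lambda>y. \<Sum>k\<in>UNIV. (y $ k)\<^sup>2))
                    (A (\<lambda>y. \<Sum>k\<in>UNIV. (y $ k)\<^sup>2)) sequentially"
  shows "\<forall>f\<in>CK K. uniform_limit (topspace Xt) (\<lambda>n. T n f) (A f) sequentially"
proof
  fix f assume f: "f \<in> CK K"
  define c where "c = barycenter A"
  have c_nonneg: "\<forall>k. 0 \<le> c x $ k" if "x \<in> topspace Xt" for x
    using barycenter_nonneg[OF A_wn A_mono K_pos that] A1_pos that unfolding c_def by simp
  have c_majorant: "sqdist_majorant A (c x) x = 0" if "x \<in> topspace Xt" for x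
    unfolding c_def using A1_pos A_eq that by (intro sqdist_majorant_barycenter) auto
  have c_mem: "c x \<in> K" if "x \<in> topspace Xt" for x
    using mem_if_sqdist_majorant_nonpos[OF K_compact K_ne A_wn A_mono that _ c_nonneg[OF that]]
      A1_pos c_majorant that by simp
  have "bounded (c ` topspace Xt)"
    using c_mem by (intro bounded_subset[OF compact_imp_bounded[OF K_compact]]) auto
  then have "uniform_limit (topspace Xt) (\<lambda>n x. sqdist_majorant (T n) (c x) x)
      (\<lambda>x. sqdist_majorant A (c x) x) sequentially"
    by (rule uniform_limit_sqdist_majorant[OF conv_1 conv_pr conv_sq])
  then have "uniform_limit (topspace Xt) (\<lambda>n x. sqdist_majorant (T n) (c x) x) (\<lambda>x. 0) sequentially"
    by (rule uniform_limit_cong'[THEN iffD1, rotated -1]) (simp_all add: c_majorant)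
  moreover have "bounded (A (\<lambda>y. 1) ` topspace Xt)"
    by (rule maps_CK_CX_bounded_image[OF A_maps X_compact]) simp
  ultimately show "uniform_limit (topspace Xt) (\<lambda>n. T n f) (A f) sequentially"
    using c_mem c_nonneg c_majorant
    by (intro uniform_limit_apply_of_sqdist_majorant[OF K_compact T_wn T_mono A_wn A_mono _ _ _ _ conv_1 _ f])
qed

end
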